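(* For twisted knot diagrams $K$ with an even number $2n$ of bars, the quantity $S(K)=\left|\sum_{i=1}^n s(e_{2i-1})-\sum_{i=1}^n s(e_{2i})\right|$ is invariant under the generalized Reidemeister moves and the twisted Reidemeister moves (which preserve the parity of the number of bars).
   Context: A twisted knot diagram is a virtual knot diagram with finitely many bars on its edges; twisted Reidemeister moves: $\Omega_1^t$ (a bar passes through a virtual crossing), $\Omega_2^t$ (two adjacent bars on an edge cancel), $\Omega_3^t$ (a real crossing is replaced by the crossing with over/under exchanged and a bar added on each of its four adjacent semiarcs). If $K$ has $2n\geq2$ bars $b_1,\dots,b_{2n}$, they cut $K$ into edges $e_1,\dots,e_{2n}$ numbered consecutively along the orientation. For an edge $e$, let $o_\pm(e)$ be the number of positive/negative crossings at which $e$ is the over-strand and $u_\pm(e)$ the number at which $e$ is the under-strand (a crossing of $e$ with itself counted once in each), and $s(e)=u_+(e)+o_-(e)-u_-(e)-o_+(e)$. If $K$ has no bars set $S(K)=0$. (The value of $S(K)$ does not depend on which edge is labeled $e_1$.) *)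

theory Defs
  imports Main
begin

text \<open>Combinatorial model: a (one-component, oriented) twisted knot diagram considered up to
virtual Reidemeister moves and the move Omega1t is encoded by its signed Gauss word with bars.
Reading the closed curve from a base point along the orientation we record a letter
Ovr c s (passing crossing c as over-strand), Und c s (passing c as under-strand), or Bar
(passing a bar).  The boolean s is the sign of crossing c (True = positive).\<close>

datatype letter = Ovr nat bool | Und nat bool | Bar

definition occurs :: "nat \<Rightarrow> letter list \<Rightarrow> bool" where
  "occurs c w \<longleftrightarrow> (\<exists>s. Ovr c s \<in> set w \<or> Und c s \<in> set w)"

definition wf_gauss :: "letter list \<Rightarrow> bool" where
  "wf_gauss w \<longleftrightarrow> (\<forall>c. occurs c w \<longrightarrow>
     (\<exists>s. count_list w (Ovr c s) = 1 \<and> count_list w (Und c s) = 1 \<and>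
          count_list w (Ovr c (\<not> s)) = 0 \<and> count_list w (Und c (\<not> s)) = 0))"

definition nbars :: "letter list \<Rightarrow> nat" where
  "nbars w = count_list w Bar"

text \<open>Classical Reidemeister moves (the virtual moves and Omega1t do not change the word).\<close>

definition R1 :: "letter list \<Rightarrow> letter list \<Rightarrow> bool" where
  "R1 w w' \<longleftrightarrow> (\<exists>u v c s. w = u @ v \<and> \<not> occurs c w \<and>
      (w' = u @ [Ovr c s, Und c s] @ v \<or> w' = u @ [Und c s, Ovr c s] @ v))"

definition R2 :: "letter list \<Rightarrow> letter list \<Rightarrow> bool" where
  "R2 w w' \<longleftrightarrow> (\<exists>u v c d s. w = u @ v \<and> c \<noteq> d \<and> \<not> occurs c w \<and> \<not> occurs d w \<and>
      (w' = [Ovr c s, Ovr d (\<not> s)] @ u @ [Und c s, Und d (\<not> s)] @ v \<or>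
       w' = [Ovr c s, Ovr d (\<not> s)] @ u @ [Und d (\<not> s), Und c s] @ v))"

text \<open>Reidemeister III: the top strand T passes over crossings x (with M) and y (with B),
the middle strand M passes under x and over z (with B), the bottom strand B passes under y
and z.  Flags a, b, g record the order along T, M, B; the sign/order relation is the one
forced by planar geometry of the triangle.\<close>
definition R3 :: "letter list \<Rightarrow> letter list \<Rightarrow> bool" where
  "R3 w w' \<longleftrightarrow> (\<exists>x y z ex ey ez a b g p1 p2 p3 u v r.
      distinct [x, y, z] \<and>
      ((a = b) \<longleftrightarrow> (ey = ez)) \<and> ((a = g) \<longleftrightarrow> (ex = ez)) \<and>
      set [p1, p2, p3] =
        set [(if a then [Ovr x ex, Ovr y ey] else [Ovr y ey, Ovr x ex]),
              (if b then [Und x ex, Ovr z ez] else [Ovr z ez, Und x ex]),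
              (if g then [Und y ey, Und z ez] else [Und z ez, Und y ey])] \<and>
      w = p1 @ u @ p2 @ v @ p3 @ r \<and>
      w' = rev p1 @ u @ rev p2 @ v @ rev p3 @ r)"

definition T2 :: "letter list \<Rightarrow> letter list \<Rightarrow> bool" where
  "T2 w w' \<longleftrightarrow> (\<exists>u v. w = u @ v \<and> w' = u @ [Bar, Bar] @ v)"

fun swap_ou :: "letter \<Rightarrow> letter" where
  "swap_ou (Ovr c s) = Und c s"
| "swap_ou (Und c s) = Ovr c s"
| "swap_ou Bar = Bar"

definition T3 :: "letter list \<Rightarrow> letter list \<Rightarrow> bool" where
  "T3 w w' \<longleftrightarrow> (\<exists>u v r c s l1 l2. {l1, l2} = {Ovr c s, Und c s} \<and>
      w = u @ [l1] @ v @ [l2] @ r \<and>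
      w' = u @ [Bar, swap_ou l1, Bar] @ v @ [Bar, swap_ou l2, Bar] @ r)"

text \<open>Change of base point (the word is cyclic).\<close>
definition Rot :: "letter list \<Rightarrow> letter list \<Rightarrow> bool" where
  "Rot w w' \<longleftrightarrow> w' = rotate1 w"

definition move :: "letter list \<Rightarrow> letter list \<Rightarrow> bool" where
  "move w w' \<longleftrightarrow> Rot w w' \<or> R1 w w' \<or> R2 w w' \<or> R3 w w' \<or> T2 w w' \<or> T3 w w'"

definition twisted_equiv :: "letter list \<Rightarrow> letter list \<Rightarrow> bool" where
  "twisted_equiv = (\<lambda>w w'. move w w' \<or> move w' w)\<^sup>*\<^sup>*"

fun split_bars :: "letter list \<Rightarrow> letter list list" where
  "split_bars [] = [[]]"
| "split_bars (Bar # w) = [] # split_bars w"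
| "split_bars (Ovr c s # w) = (Ovr c s # hd (split_bars w)) # tl (split_bars w)"
| "split_bars (Und c s # w) = (Und c s # hd (split_bars w)) # tl (split_bars w)"

text \<open>If w = w0 Bar w1 Bar ... Bar wk (k >= 1 bars) the edges are e1 = w1, ..., e(k-1) = w(k-1),
ek = wk @ w0 (the edge through the base point); edges w ! (i - 1) is e_i.\<close>
definition edges :: "letter list \<Rightarrow> letter list list" where
  "edges w = (let ss = split_bars w in butlast (tl ss) @ [last ss @ hd ss])"

definition o_pos :: "letter list \<Rightarrow> nat" where "o_pos e = card {c. Ovr c True \<in> set e}"
definition o_neg :: "letter list \<Rightarrow> nat" where "o_neg e = card {c. Ovr c False \<in> set e}"
definition u_pos :: "letter list \<Rightarrow> nat" where "u_pos e = card {c. Und c True \<in> set e}"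
definition u_neg :: "letter list \<Rightarrow> nat" where "u_neg e = card {c. Und c False \<in> set e}"

definition s_edge :: "letter list \<Rightarrow> int" where
  "s_edge e = int (u_pos e) + int (o_neg e) - int (u_neg e) - int (o_pos e)"

definition S :: "letter list \<Rightarrow> int" where
  "S w = (if nbars w = 0 then 0 else
     (let E = edges w; n = nbars w div 2 in
       \<bar>(\<Sum>i = 1..n. s_edge (E ! (2 * i - 1 - 1))) - (\<Sum>i = 1..n. s_edge (E ! (2 * i - 1)))\<bar>))"

end

theory Submission
  imports Defs
begin

(* Let the twisted weight tw(w) be the sum of the contributions +1 (u+, o-) and -1 (u-, o+)
   of the letters of the Gauss word, with the sign flipped after every bar.  Consecutive edges
   are separated by exactly one bar, so for an even number of bars the alternating sum of the
   s(e_i) is -tw(K), i.e. S(K) = |tw(K)|; gluing the two ends of the edge through the base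
   point does not spoil the signs because the number of bars is even.
   Every move preserves the parity of the number of bars, well-formedness and |tw|: R1 and R2
   insert bar-free letter pairs of total weight zero, R3 reverses bar-free pairs, Omega2t
   inserts two adjacent bars, and in Omega3t the bars around a crossing letter flip its sign
   exactly while the over/under exchange negates its weight.  Moving the base point changes
   tw at most by a global sign, again because the number of bars is even. *)

fun letter_weight :: "letter \<Rightarrow> int" where
  "letter_weight (Ovr c s) = (if s then -1 else 1)"
| "letter_weight (Und c s) = (if s then 1 else -1)"
| "letter_weight Bar = 0"

definition word_weight :: "letter list \<Rightarrow> int" where
  "word_weight w = (\<Sum>l\<leftarrow>w. letter_weight l)"

fun twisted_weight :: "letter list \<Rightarrow> int" where
  "twisted_weight [] = 0"
| "twisted_weight (l # w) =
     letter_weight l + (if l = Bar then - twisted_weight w else twisted_weight w)"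

fun alternating_sum :: "int list \<Rightarrow> int" where
  "alternating_sum [] = 0"
| "alternating_sum (a # as) = a - alternating_sum as"

lemma occurs_iff_count:
  "occurs c w \<longleftrightarrow> (\<exists>s. count_list w (Ovr c s) \<noteq> 0 \<or> count_list w (Und c s) \<noteq> 0)"
  unfolding occurs_def by (simp add: count_list_0_iff)

lemma wf_gauss_cong:
  assumes "\<And>l. l \<noteq> Bar \<Longrightarrow> count_list w' l = count_list w l"
  shows "wf_gauss w' \<longleftrightarrow> wf_gauss w"
  by (simp add: wf_gauss_def occurs_iff_count assms)

definition wf_crossing :: "letter list \<Rightarrow> nat \<Rightarrow> bool" where
  "wf_crossing w c \<longleftrightarrow> (occurs c w \<longrightarrow>
     (\<exists>s. count_list w (Ovr c s) = 1 \<and> count_list w (Und c s) = 1 \<and>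
          count_list w (Ovr c (\<not> s)) = 0 \<and> count_list w (Und c (\<not> s)) = 0))"

lemma wf_gauss_iff_wf_crossing: "wf_gauss w \<longleftrightarrow> (\<forall>c. wf_crossing w c)"
  unfolding wf_gauss_def wf_crossing_def ..

lemma wf_gauss_add_crossing:
  assumes fresh: "\<not> occurs c w"
    and counts: "\<And>l. count_list w' l = count_list w l + count_list [Ovr c s, Und c s] l"
  shows "wf_gauss w' \<longleftrightarrow> wf_gauss w"
proof -
  have "wf_crossing w' d \<longleftrightarrow> wf_crossing w d" for d
  proof (cases "d = c")
    case True
    with fresh show ?thesis
      unfolding wf_crossing_def occurs_iff_count counts by (auto intro!: exI[of _ s])
  qed (simp add: wf_crossing_def occurs_iff_count counts)
  then show ?thesis unfolding wf_gauss_iff_wf_crossing by blast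
qed

lemma wf_gauss_count:
  assumes "wf_gauss w"
  shows "count_list w (Und c s) = count_list w (Ovr c s) \<and> count_list w (Ovr c s) \<le> 1"
proof (cases "occurs c w")
  case True
  with assms obtain t where "count_list w (Ovr c t) = 1" "count_list w (Und c t) = 1"
      "count_list w (Ovr c (\<not> t)) = 0" "count_list w (Und c (\<not> t)) = 0"
    unfolding wf_gauss_def by blast
  then show ?thesis by (cases "s = t") auto
qed (simp add: occurs_iff_count)

lemma distinct_filter_if_count_le_1:
  assumes "\<And>x. P x \<Longrightarrow> count_list w x \<le> 1"
  shows "distinct (filter P w)"
  using assms
proof (induction w)
  case (Cons a w)
  have "count_list w x \<le> 1" if "P x" for x
    using Cons.prems[OF that] by (simp split: if_splits)
  moreover have "a \<notin> set w" if "P a"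
    using Cons.prems[OF that] by (simp add: count_list_0_iff)
  ultimately show ?case using Cons.IH by simp
qed simp

lemma wf_gauss_distinct: "wf_gauss w \<Longrightarrow> distinct (filter (\<lambda>l. l \<noteq> Bar) w)"
  by (rule distinct_filter_if_count_le_1) (metis letter.exhaust wf_gauss_count)

lemma card_preimage_Cons:
  assumes "inj f" and "x \<notin> set e"
  shows "card {c. f c \<in> set (x # e)} = (if x \<in> range f then 1 else 0) + card {c. f c \<in> set e}"
proof (cases "x \<in> range f")
  case True
  then obtain c0 where x: "x = f c0" by auto
  then have "{c. f c \<in> set (x # e)} = insert c0 {c. f c \<in> set e}"
    using assms(1) by (auto simp: inj_eq)
  moreover have "finite {c. f c \<in> set e}"
    using finite_vimageI[OF finite_set assms(1)] by (simp add: vimage_def)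
  ultimately show ?thesis using x assms(2) True by simp
next
  case False
  then have "{c. f c \<in> set (x # e)} = {c. f c \<in> set e}" by auto
  with False show ?thesis by simp
qed

lemma s_edge_eq_word_weight: "distinct e \<Longrightarrow> s_edge e = word_weight e"
proof (induction e)
  case (Cons x e)
  then have x: "x \<notin> set e" and IH: "s_edge e = word_weight e" by auto
  have "inj (\<lambda>c. Ovr c b)" "inj (\<lambda>c. Und c b)" for b by (auto intro: injI)
  note card_Cons = this[THEN card_preimage_Cons, OF x]
  show ?case using IH
    unfolding s_edge_def o_pos_def o_neg_def u_pos_def u_neg_def card_Cons
    by (cases x) (auto simp: word_weight_def)
qed (simp add: s_edge_def o_pos_def o_neg_def u_pos_def u_neg_def word_weight_def)

lemma s_edge_wf_gauss: "wf_gauss w \<Longrightarrow> s_edge w = 0"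
proof -
  assume "wf_gauss w"
  then have "Und c s \<in> set w \<longleftrightarrow> Ovr c s \<in> set w" for c s
    by (metis count_list_0_iff wf_gauss_count)
  then show "s_edge w = 0"
    by (simp add: s_edge_def o_pos_def o_neg_def u_pos_def u_neg_def)
qed

lemma twisted_weight_append:
  "twisted_weight (u @ v) = twisted_weight u + (-1) ^ count_list u Bar * twisted_weight v"
  by (induction u) (auto simp: algebra_simps)

definition invariants_agree :: "letter list \<Rightarrow> letter list \<Rightarrow> bool" where
  "invariants_agree w w' \<longleftrightarrow>
     (even (nbars w) \<longleftrightarrow> even (nbars w')) \<and> (wf_gauss w \<longleftrightarrow> wf_gauss w') \<and>
     (even (nbars w) \<longrightarrow> \<bar>twisted_weight w\<bar> = \<bar>twisted_weight w'\<bar>)"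

lemma invariants_agree_refl: "invariants_agree w w"
  unfolding invariants_agree_def by simp

lemma invariants_agree_sym: "invariants_agree w w' \<Longrightarrow> invariants_agree w' w"
  unfolding invariants_agree_def by auto

lemma invariants_agree_trans:
  "invariants_agree u v \<Longrightarrow> invariants_agree v w \<Longrightarrow> invariants_agree u w"
  unfolding invariants_agree_def by auto

lemma invariants_agree_Rot: "Rot w w' \<Longrightarrow> invariants_agree w w'"
proof (cases w)
  case (Cons l v)
  moreover assume "Rot w w'"
  ultimately have "w' = v @ [l]" by (simp add: Rot_def)
  moreover have "wf_gauss w' \<longleftrightarrow> wf_gauss w"
    by (rule wf_gauss_cong) (simp add: Cons \<open>w' = v @ [l]\<close>)
  ultimately show ?thesis
    by (auto simp: invariants_agree_def nbars_def Cons twisted_weight_append)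
qed (simp add: Rot_def invariants_agree_refl)

lemma invariants_agree_R1: "R1 w w' \<Longrightarrow> invariants_agree w w'"
proof -
  assume "R1 w w'"
  then obtain u v c s where w: "w = u @ v" and fresh: "\<not> occurs c w" and
    w': "w' = u @ [Ovr c s, Und c s] @ v \<or> w' = u @ [Und c s, Ovr c s] @ v"
    unfolding R1_def by blast
  have "wf_gauss w' \<longleftrightarrow> wf_gauss w"
    by (rule wf_gauss_add_crossing[where s = s, OF fresh]) (use w' in \<open>auto simp: w\<close>)
  with w' show ?thesis
    by (auto simp: invariants_agree_def nbars_def w twisted_weight_append)
qed

lemma invariants_agree_R2: "R2 w w' \<Longrightarrow> invariants_agree w w'"
proof -
  assume "R2 w w'"
  then obtain u v c d s where w: "w = u @ v" and "c \<noteq> d" and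
    fresh: "\<not> occurs c w" "\<not> occurs d w" and
    w': "w' = [Ovr c s, Ovr d (\<not> s)] @ u @ [Und c s, Und d (\<not> s)] @ v \<or>
         w' = [Ovr c s, Ovr d (\<not> s)] @ u @ [Und d (\<not> s), Und c s] @ v"
    unfolding R2_def by blast
  define w1 where "w1 = Ovr c s # Und c s # w"
  have "\<not> occurs d w1" using fresh(2) \<open>c \<noteq> d\<close> by (simp add: w1_def occurs_def)
  then have "wf_gauss w' \<longleftrightarrow> wf_gauss w1"
    by (rule wf_gauss_add_crossing[where s = "\<not> s"]) (use w' in \<open>auto simp: w1_def w\<close>)
  also have "\<dots> \<longleftrightarrow> wf_gauss w"
    by (rule wf_gauss_add_crossing[where s = s, OF fresh(1)]) (simp add: w1_def)
  finally show ?thesis using w'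
    by (auto simp: invariants_agree_def nbars_def w twisted_weight_append)
qed

lemma invariants_agree_R3: "R3 w w' \<Longrightarrow> invariants_agree w w'"
proof -
  assume "R3 w w'"
  then obtain x y z ex ey ez a b g p1 p2 p3 u v r where
    p: "set [p1, p2, p3] =
        set [(if a then [Ovr x ex, Ovr y ey] else [Ovr y ey, Ovr x ex]),
              (if b then [Und x ex, Ovr z ez] else [Ovr z ez, Und x ex]),
              (if g then [Und y ey, Und z ez] else [Und z ez, Und y ey])]" and
      w: "w = p1 @ u @ p2 @ v @ p3 @ r" and
      w': "w' = rev p1 @ u @ rev p2 @ v @ rev p3 @ r"
    unfolding R3_def by blast
  have "twisted_weight (rev p) = twisted_weight p" if "p \<in> set [p1, p2, p3]" for p
    using that unfolding p by auto
  moreover have "wf_gauss w' \<longleftrightarrow> wf_gauss w"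
    by (rule wf_gauss_cong) (simp add: w w')
  ultimately show ?thesis
    by (auto simp: invariants_agree_def nbars_def w w' twisted_weight_append)
qed

lemma invariants_agree_T2: "T2 w w' \<Longrightarrow> invariants_agree w w'"
proof -
  assume "T2 w w'"
  then obtain u v where w: "w = u @ v" and w': "w' = u @ [Bar, Bar] @ v"
    unfolding T2_def by blast
  have "wf_gauss w' \<longleftrightarrow> wf_gauss w"
    by (rule wf_gauss_cong) (simp add: w w')
  then show ?thesis
    by (auto simp: invariants_agree_def nbars_def w w' twisted_weight_append)
qed

lemma invariants_agree_T3: "T3 w w' \<Longrightarrow> invariants_agree w w'"
proof -
  assume "T3 w w'"
  then obtain u v r c s l1 l2 where l: "{l1, l2} = {Ovr c s, Und c s}" and
      w: "w = u @ [l1] @ v @ [l2] @ r" and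
      w': "w' = u @ [Bar, swap_ou l1, Bar] @ v @ [Bar, swap_ou l2, Bar] @ r"
    unfolding T3_def by blast
  from l have l: "l1 = Ovr c s \<and> l2 = Und c s \<or> l1 = Und c s \<and> l2 = Ovr c s"
    by (simp add: doubleton_eq_iff)
  then have counts: "count_list w' l = count_list w l + (if l = Bar then 4 else 0)" for l
    by (elim disjE) (simp_all add: w w')
  have "wf_gauss w' \<longleftrightarrow> wf_gauss w"
    by (rule wf_gauss_cong) (simp add: counts)
  moreover have "twisted_weight w' = twisted_weight w"
    using l by (elim disjE) (simp_all add: w w' twisted_weight_append)
  ultimately show ?thesis
    using counts[of Bar] by (simp add: invariants_agree_def nbars_def)
qed

lemma invariants_agree_move: "move w w' \<Longrightarrow> invariants_agree w w'"
  unfolding move_def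
  using invariants_agree_Rot invariants_agree_R1 invariants_agree_R2 invariants_agree_R3
    invariants_agree_T2 invariants_agree_T3 by blast

lemma invariants_agree_twisted_equiv: "twisted_equiv w w' \<Longrightarrow> invariants_agree w w'"
  unfolding twisted_equiv_def
proof (induction rule: rtranclp_induct)
  case (step v w')
  then show ?case
    using invariants_agree_move invariants_agree_sym invariants_agree_trans by blast
qed (rule invariants_agree_refl)

lemma alternating_sum_append:
  "alternating_sum (xs @ ys) = alternating_sum xs + (-1) ^ length xs * alternating_sum ys"
  by (induction xs) (auto simp: algebra_simps)

lemma sum_odd_minus_sum_even_eq_alternating_sum:
  assumes "2 * n \<le> length xs"
  shows "(\<Sum>i = 1..n. f (xs ! (2 * i - 1 - 1))) - (\<Sum>i = 1..n. f (xs ! (2 * i - 1))) =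
    alternating_sum (map f (take (2 * n) xs))"
  using assms
proof (induction n)
  case (Suc n)
  then have "take (2 * Suc n) xs = take (2 * n) xs @ [xs ! (2 * n), xs ! (2 * n + 1)]"
    by (simp add: take_Suc_conv_app_nth numeral_2_eq_2)
  with Suc show ?case by (simp add: alternating_sum_append)
qed simp

lemma split_bars_not_Nil: "split_bars w \<noteq> []"
  by (induction w rule: split_bars.induct) auto

lemma split_bars_Cons_letter:
  assumes "l \<noteq> Bar" and "split_bars w = e # es"
  shows "split_bars (l # w) = (l # e) # es"
  using assms by (cases l) auto

lemma split_bars_induct [case_names Nil Bar Letter]:
  assumes "P []" and "\<And>w. P w \<Longrightarrow> P (Bar # w)"
    and "\<And>l w e es. l \<noteq> Bar \<Longrightarrow> split_bars w = e # es \<Longrightarrow> split_bars (l # w) = (l # e) # es \<Longrightarrow>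
      P w \<Longrightarrow> P (l # w)"
  shows "P w"
proof (induction w)
  case (Cons l w)
  show ?case
  proof (cases "l = Bar")
    case False
    obtain e es where "split_bars w = e # es" using split_bars_not_Nil by (meson neq_Nil_conv)
    with False Cons assms(3) split_bars_Cons_letter show ?thesis by blast
  qed (simp add: Cons assms(2))
qed (rule assms(1))

lemma length_split_bars: "length (split_bars w) = nbars w + 1"
  by (induction w rule: split_bars_induct) (auto simp: nbars_def)

lemma concat_split_bars: "concat (split_bars w) = filter (\<lambda>l. l \<noteq> Bar) w"
  by (induction w rule: split_bars_induct) auto

lemma twisted_weight_split_bars:
  "twisted_weight w = alternating_sum (map word_weight (split_bars w))"
  by (induction w rule: split_bars_induct) (auto simp: word_weight_def)

lemma edges_split_bars:
  assumes "split_bars w = e0 # es" and "es \<noteq> []"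
  shows "edges w = butlast es @ [last es @ e0]"
  using assms by (simp add: edges_def)

lemma length_edges: "nbars w \<noteq> 0 \<Longrightarrow> length (edges w) = nbars w"
  using length_split_bars[of w] by (cases "split_bars w") (auto simp: edges_def)

lemma S_eq_alternating_sum_edges:
  assumes "nbars w \<noteq> 0" and "even (nbars w)"
  shows "S w = \<bar>alternating_sum (map s_edge (edges w))\<bar>"
proof -
  have "2 * (nbars w div 2) = length (edges w)"
    using assms by (simp add: length_edges)
  with sum_odd_minus_sum_even_eq_alternating_sum[of "nbars w div 2" "edges w" s_edge]
  show ?thesis using assms by (simp add: S_def Let_def)
qed

(* The hypothesis on nbars is needed: without bars, edges w = [w @ w]. *)
lemma distinct_edges:
  assumes "wf_gauss w" and "nbars w \<noteq> 0" and "e \<in> set (edges w)"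
  shows "distinct e"
proof -
  obtain e0 es where ss: "split_bars w = e0 # es" by (meson neq_Nil_conv split_bars_not_Nil)
  have "distinct (concat (split_bars w))"
    using wf_gauss_distinct[OF assms(1)] by (simp add: concat_split_bars)
  moreover have "es \<noteq> []"
    using assms(2) length_split_bars[of w] by (auto simp: ss)
  ultimately have "distinct (concat (e0 # butlast es @ [last es]))"
    by (simp add: ss)
  then show ?thesis
    using assms(3) by (auto simp: edges_split_bars[OF ss \<open>es \<noteq> []\<close>] distinct_concat_iff)
qed

lemma alternating_sum_edges:
  assumes "nbars w \<noteq> 0" and "even (nbars w)"
  shows "alternating_sum (map word_weight (edges w)) = - twisted_weight w"
proof -
  obtain e0 es where ss: "split_bars w = e0 # es" by (meson neq_Nil_conv split_bars_not_Nil)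
  have "length es = nbars w" using length_split_bars[of w] by (simp add: ss)
  then have "es \<noteq> []" and "(-1::int) ^ length (butlast es) = -1"
    using assms by auto
  then have snoc: "alternating_sum (map word_weight (butlast es @ [e])) =
      alternating_sum (map word_weight (butlast es)) - word_weight e" for e
    by (simp add: alternating_sum_append)
  have "alternating_sum (map word_weight (edges w)) =
      alternating_sum (map word_weight es) - word_weight e0"
    using snoc[of "last es @ e0"] snoc[of "last es"] \<open>es \<noteq> []\<close>
    by (simp add: edges_split_bars[OF ss \<open>es \<noteq> []\<close>] word_weight_def)
  then show ?thesis by (simp add: twisted_weight_split_bars ss)
qed

lemma twisted_weight_eq_word_weight: "Bar \<notin> set w \<Longrightarrow> twisted_weight w = word_weight w"
  by (induction w) (auto simp: word_weight_def)

lemma S_eq_abs_twisted_weight: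
  assumes "wf_gauss w" and "even (nbars w)"
  shows "S w = \<bar>twisted_weight w\<bar>"
proof (cases "nbars w = 0")
  case True
  then have "Bar \<notin> set w" by (simp add: nbars_def count_list_0_iff)
  then have "filter (\<lambda>l. l \<noteq> Bar) w = w" by (auto simp: filter_id_conv)
  then have "distinct w" using wf_gauss_distinct[OF assms(1)] by simp
  with \<open>Bar \<notin> set w\<close> have "twisted_weight w = s_edge w"
    by (simp add: twisted_weight_eq_word_weight s_edge_eq_word_weight)
  with True s_edge_wf_gauss[OF assms(1)] show ?thesis by (simp add: S_def)
next
  case False
  have "S w = \<bar>alternating_sum (map s_edge (edges w))\<bar>"
    by (rule S_eq_alternating_sum_edges[OF False assms(2)])
  also have "map s_edge (edges w) = map word_weight (edges w)"
    by (rule map_cong[OF refl]) (simp add: distinct_edges[OF assms(1) False] s_edge_eq_word_weight)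
  also have "alternating_sum \<dots> = - twisted_weight w"
    by (rule alternating_sum_edges[OF False assms(2)])
  finally show ?thesis by simp
qed

theorem lemma7p5:
  assumes "wf_gauss K"
    and "even (nbars K)"
    and "twisted_equiv K K'"
  shows "S K = S K'"
proof -
  from assms have "wf_gauss K'" and "even (nbars K')"
    and "\<bar>twisted_weight K\<bar> = \<bar>twisted_weight K'\<bar>"
    using invariants_agree_twisted_equiv[OF assms(3)] unfolding invariants_agree_def by auto
  with assms(1,2) show ?thesis by (simp add: S_eq_abs_twisted_weight)
qed

end
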